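(* Let $U\subset\mathbb{R}^2$, and let measurements be modeled by a Gaussian process with squared-exponential kernel $k(x,x')=\sigma_0^2\exp\!\left(-\frac{\|x-x'\|^2}{2l^2}\right)$ ($\sigma_0^2>0$, $l>0$) and i.i.d. additive Gaussian noise of variance $\omega^2>0$. Let $0<\Delta<\sigma_0^2$, let $x\in U$ be a test location and let $X$ be a finite collection of measurement locations (repetitions allowed). If there is a measurement location $x_i\in X$ at distance $r$ from $x$ at which $n_{\text{suff}}\ge 1$ measurements are taken, with $$r\le l\sqrt{-\log\left(\left(1+\frac{\omega^2}{n_{\text{suff}}\sigma_0^2}\right)\left(1-\frac{\Delta}{\sigma_0^2}\right)\right)},$$ then $MSE(x)\le\Delta$.
   Context: For measurement locations $X=(x_1,\dots,x_n)$ (a location repeated $m$ times means $m$ measurements there), the GP posterior variance at $x$ is $\hat\sigma^2_{x|X}=k(x,x)-\mathbf{k}(x,X)\left[\mathbf{K}(X,X)+\omega^2\mathbf{I}\right]^{-1}\mathbf{k}(X,x)$, where $\mathbf{K}(X,X)$ has entries $k(x_p,x_q)$ and $\mathbf{k}(x,X)=(k(x,x_1),\dots,k(x,x_n))$. The MSE of the GP prediction at $x$ is $MSE(x)=\hat\sigma^2_{x|X}$. *)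

theory Defs
  imports "HOL-Analysis.Analysis" "Jordan_Normal_Form.Gauss_Jordan_Elimination"
begin

definition se_kernel :: "real \<Rightarrow> real \<Rightarrow> real^2 \<Rightarrow> real^2 \<Rightarrow> real" where
  "se_kernel s0sq l x x' = s0sq * exp (- (norm (x - x'))\<^sup>2 / (2 * l\<^sup>2))"

text \<open>GP posterior variance at x given measurement locations X (a list; repetitions = repeated
 measurements), kernel k and noise variance wsq = omega^2:
 k(x,x) - k(x,X) [K(X,X) + omega^2 I]^{-1} k(X,x).\<close>
definition post_var :: "('p \<Rightarrow> 'p \<Rightarrow> real) \<Rightarrow> real \<Rightarrow> 'p list \<Rightarrow> 'p \<Rightarrow> real" where
  "post_var k wsq X x =
     (let n = length X;
          KX = Matrix.mat n n (\<lambda>(p, q). k (X ! p) (X ! q));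
          kv = Matrix.vec n (\<lambda>p. k x (X ! p));
          M = KX + wsq \<cdot>\<^sub>m (1\<^sub>m n)
      in k x x - Matrix.scalar_prod kv (the (mat_inverse M) *\<^sub>v kv))"

text \<open>MSE of the GP prediction, which equals the posterior variance.\<close>
definition MSE :: "('p \<Rightarrow> 'p \<Rightarrow> real) \<Rightarrow> real \<Rightarrow> 'p list \<Rightarrow> 'p \<Rightarrow> real" where
  "MSE k wsq X x = post_var k wsq X x"

end

theory Submission
  imports Defs "Jordan_Normal_Form.Determinant"
begin

(* With M = K(X,X) + omega^2 I positive definite and w = M^-1 k(X,x), the subtracted term
   k(x,X) w is the maximum over all weight vectors a of 2 a.k(X,x) - a.M a.  Putting the same
   weight k(x,x_i) / (n sigma_0^2 + omega^2) on each of the n copies of x_i and zero elsewhere gives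
   MSE(x) <= sigma_0^2 - n k(x,x_i)^2 / (n sigma_0^2 + omega^2), and the radius condition is exactly
   the statement that this bound is at most Delta.  Positive definiteness of M rests on the
   squared-exponential kernel being positive semidefinite, which follows from the power series
   of exp(<x,y>/l^2). *)

definition psd_kernel :: "('a \<Rightarrow> 'a \<Rightarrow> real) \<Rightarrow> bool" where
  "psd_kernel k \<longleftrightarrow> (\<forall>n (c :: nat \<Rightarrow> real) z. 0 \<le> (\<Sum>p<n. \<Sum>q<n. c p * c q * k (z p) (z q)))"

lemma psd_kernelD:
  fixes c :: "nat \<Rightarrow> real"
  shows "psd_kernel k \<Longrightarrow> 0 \<le> (\<Sum>p<n. \<Sum>q<n. c p * c q * k (z p) (z q))"
  unfolding psd_kernel_def by blast

lemma psd_kernel_diag_nonneg: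
  assumes "psd_kernel k"
  shows "0 \<le> k u u"
  using psd_kernelD[OF assms, where n=1 and c="\<lambda>_. 1" and z="\<lambda>_. u"] by simp

lemma psd_kernel_const_one: "psd_kernel (\<lambda>_ _. 1)"
  unfolding psd_kernel_def
proof (intro allI)
  fix n :: nat and c :: "nat \<Rightarrow> real" and z :: "nat \<Rightarrow> 'a"
  have "0 \<le> (\<Sum>p<n. c p) * (\<Sum>q<n. c q)" by simp
  then show "0 \<le> (\<Sum>p<n. \<Sum>q<n. c p * c q * (\<lambda>_ _. 1::real) (z p) (z q))"
    by (simp add: sum_product)
qed

lemma psd_kernel_scale:
  assumes "psd_kernel k" and "0 \<le> a"
  shows "psd_kernel (\<lambda>x y. a * k x y)"
  unfolding psd_kernel_def
proof (intro allI)
  fix n :: nat and c :: "nat \<Rightarrow> real" and z :: "nat \<Rightarrow> 'a"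
  have "0 \<le> a * (\<Sum>p<n. \<Sum>q<n. c p * c q * k (z p) (z q))"
    by (intro mult_nonneg_nonneg assms(2) psd_kernelD[OF assms(1)])
  then show "0 \<le> (\<Sum>p<n. \<Sum>q<n. c p * c q * (a * k (z p) (z q)))"
    by (simp add: sum_distrib_left mult_ac)
qed

lemma psd_kernel_conj:
  assumes "psd_kernel k"
  shows "psd_kernel (\<lambda>x y. f x * f y * k x y)"
  unfolding psd_kernel_def
proof (intro allI)
  fix n :: nat and c :: "nat \<Rightarrow> real" and z :: "nat \<Rightarrow> 'a"
  have "0 \<le> (\<Sum>p<n. \<Sum>q<n. (c p * f (z p)) * (c q * f (z q)) * k (z p) (z q))"
    using assms by (rule psd_kernelD)
  then show "0 \<le> (\<Sum>p<n. \<Sum>q<n. c p * c q * (f (z p) * f (z q) * k (z p) (z q)))"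
    by (simp add: mult_ac)
qed

lemma psd_kernel_mult_exp:
  assumes "psd_kernel k" and "0 \<le> s"
  shows "psd_kernel (\<lambda>x y. k x y * exp (s * g x * g y))"
  unfolding psd_kernel_def
proof (intro allI)
  fix n :: nat and c :: "nat \<Rightarrow> real" and z :: "nat \<Rightarrow> 'a"
  \<comment> \<open>Power series of exp: the j-th term is a quadratic form of k with coefficients c p * g (z p) ^ j.\<close>
  define T where "T j = s ^ j / fact j *
    (\<Sum>p<n. \<Sum>q<n. (c p * g (z p) ^ j) * (c q * g (z q) ^ j) * k (z p) (z q))" for j
  have exp_series: "(\<lambda>j. c p * c q * k (z p) (z q) * (s ^ j / fact j * (g (z p) ^ j * g (z q) ^ j)))
      sums (c p * c q * (k (z p) (z q) * exp (s * g (z p) * g (z q))))" for p q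
  proof -
    have "(\<lambda>j. (s * g (z p) * g (z q)) ^ j /\<^sub>R fact j) sums exp (s * g (z p) * g (z q))"
      by (rule exp_converges)
    then have "(\<lambda>j. s ^ j / fact j * (g (z p) ^ j * g (z q) ^ j)) sums exp (s * g (z p) * g (z q))"
      by (simp add: power_mult_distrib divide_inverse mult_ac)
    from sums_mult[OF this, of "c p * c q * k (z p) (z q)"] show ?thesis
      by (simp only: mult.assoc)
  qed
  have series: "T sums (\<Sum>p<n. \<Sum>q<n. c p * c q * (k (z p) (z q) * exp (s * g (z p) * g (z q))))"
  proof -
    have "(\<lambda>j. \<Sum>p<n. \<Sum>q<n. c p * c q * k (z p) (z q) * (s ^ j / fact j * (g (z p) ^ j * g (z q) ^ j)))
        sums (\<Sum>p<n. \<Sum>q<n. c p * c q * (k (z p) (z q) * exp (s * g (z p) * g (z q))))"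
      by (intro sums_sum exp_series)
    moreover have "(\<Sum>p<n. \<Sum>q<n. c p * c q * k (z p) (z q) * (s ^ j / fact j * (g (z p) ^ j * g (z q) ^ j)))
        = T j" for j
      unfolding T_def sum_distrib_left by (intro sum.cong refl) (simp add: mult_ac)
    ultimately show ?thesis by simp
  qed
  have "0 \<le> T j" for j
    unfolding T_def using assms psd_kernelD by (intro mult_nonneg_nonneg) auto
  then have "0 \<le> suminf T"
    using series by (intro suminf_nonneg) (auto dest: sums_summable)
  then show "0 \<le> (\<Sum>p<n. \<Sum>q<n. c p * c q * (k (z p) (z q) * exp (s * g (z p) * g (z q))))"
    using sums_unique[OF series] by simp
qed

lemma psd_kernel_exp_inner:
  assumes "0 \<le> s"
  shows "psd_kernel (\<lambda>x y :: 'a :: euclidean_space. exp (s * (inner x y)))"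
proof -
  have "psd_kernel (\<lambda>x y :: 'a. \<Prod>b\<in>B. exp (s * (inner x b) * (inner y b)))" if "finite B" for B
    using that
  proof (induction B rule: finite_induct)
    case empty
    show ?case by (simp add: psd_kernel_const_one)
  next
    case (insert b B)
    then show ?case
      using psd_kernel_mult_exp[OF insert.IH assms, of "\<lambda>x. inner x b"] by (simp add: mult.commute)
  qed
  moreover have "exp (s * (inner x y)) = (\<Prod>b\<in>Basis. exp (s * (inner x b) * (inner y b)))" for x y :: 'a
    by (simp add: euclidean_inner[of x y] sum_distrib_left exp_sum mult.assoc)
  ultimately show ?thesis by simp
qed

lemma psd_kernel_gaussian:
  assumes "0 \<le> a"
  shows "psd_kernel (\<lambda>x y :: 'a :: euclidean_space. a * exp (- (norm (x - y))\<^sup>2 / (2 * l\<^sup>2)))"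
proof -
  define f where "f x = exp (- (norm x)\<^sup>2 / (2 * l\<^sup>2))" for x :: 'a
  have norm_diff: "(norm (x - y))\<^sup>2 = (norm x)\<^sup>2 + (norm y)\<^sup>2 - 2 * inner x y" for x y :: 'a
    using dot_norm_neg[of x y] by (simp add: field_simps)
  have exponent: "- (A + B - 2 * C) / (2 * l\<^sup>2) = - A / (2 * l\<^sup>2) + - B / (2 * l\<^sup>2) + 1 / l\<^sup>2 * C"
    for A B C :: real
    by (simp add: diff_divide_distrib add_divide_distrib)
  have "exp (- (norm (x - y))\<^sup>2 / (2 * l\<^sup>2)) = f x * f y * exp (1 / l\<^sup>2 * inner x y)" for x y :: 'a
    unfolding norm_diff exponent exp_add f_def ..
  moreover have "psd_kernel (\<lambda>x y :: 'a. a * (f x * f y * exp (1 / l\<^sup>2 * inner x y)))"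
    using assms by (intro psd_kernel_scale psd_kernel_conj psd_kernel_exp_inner) auto
  ultimately show ?thesis by simp
qed

lemma psd_kernel_se_kernel: "0 \<le> s0sq \<Longrightarrow> psd_kernel (se_kernel s0sq l)"
  unfolding se_kernel_def[abs_def] by (rule psd_kernel_gaussian)

lemma psd_quadratic_form_bound:
  fixes G :: "nat \<Rightarrow> nat \<Rightarrow> real"
  assumes sym: "\<And>p q. p < n \<Longrightarrow> q < n \<Longrightarrow> G p q = G q p"
    and psd: "\<And>b. 0 \<le> (\<Sum>p<n. \<Sum>q<n. b p * b q * G p q)"
    and solves: "\<And>p. p < n \<Longrightarrow> (\<Sum>q<n. G p q * w q) = c p"
  shows "2 * (\<Sum>p<n. a p * c p) - (\<Sum>p<n. \<Sum>q<n. a p * a q * G p q) \<le> (\<Sum>p<n. c p * w p)"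
proof -
  have cross: "(\<Sum>p<n. \<Sum>q<n. b p * w q * G p q) = (\<Sum>p<n. b p * c p)" for b
  proof (rule sum.cong[OF refl])
    fix p assume "p \<in> {..<n}"
    have "(\<Sum>q<n. b p * w q * G p q) = b p * (\<Sum>q<n. G p q * w q)"
      by (simp add: sum_distrib_left mult_ac)
    with \<open>p \<in> {..<n}\<close> show "(\<Sum>q<n. b p * w q * G p q) = b p * c p"
      by (simp add: solves)
  qed
  have cross_swap: "(\<Sum>p<n. \<Sum>q<n. w p * a q * G p q) = (\<Sum>p<n. \<Sum>q<n. a p * w q * G p q)"
    by (subst sum.swap) (auto intro!: sum.cong simp: sym mult_ac)
  have "(\<Sum>p<n. \<Sum>q<n. (a p - w p) * (a q - w q) * G p q)
      = (\<Sum>p<n. \<Sum>q<n. a p * a q * G p q) - (\<Sum>p<n. \<Sum>q<n. a p * w q * G p q)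
        - (\<Sum>p<n. \<Sum>q<n. w p * a q * G p q) + (\<Sum>p<n. \<Sum>q<n. w p * w q * G p q)"
    by (simp add: algebra_simps sum_subtractf sum.distrib)
  moreover have "0 \<le> (\<Sum>p<n. \<Sum>q<n. (a p - w p) * (a q - w q) * G p q)"
    by (rule psd)
  ultimately show ?thesis
    unfolding cross_swap cross by (simp add: mult.commute)
qed

lemma mult_mat_vec_index_sum:
  assumes "A \<in> carrier_mat n m" and "v \<in> carrier_vec m" and "i < n"
  shows "vec_index (A *\<^sub>v v) i = (\<Sum>j<m. A $$ (i, j) * vec_index v j)"
  using assms by (simp add: scalar_prod_def atLeast0LessThan)

lemma mat_inverse_if_injective:
  fixes A :: "'a :: field mat"
  assumes A: "A \<in> carrier_mat n n"
    and inj: "\<And>v. v \<in> carrier_vec n \<Longrightarrow> A *\<^sub>v v = 0\<^sub>v n \<Longrightarrow> v = 0\<^sub>v n"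
  obtains B where "mat_inverse A = Some B" and "A * B = 1\<^sub>m n" and "B \<in> carrier_mat n n"
proof -
  have "det A \<noteq> 0"
    using det_0_iff_vec_prod_zero[OF A] inj by blast
  then have "A \<in> Units (ring_mat TYPE('a) n undefined)"
    by (rule det_non_zero_imp_unit[OF A])
  then obtain B where B: "mat_inverse A = Some B"
    using mat_inverse(1)[OF A, of undefined] by (cases "mat_inverse A") auto
  with mat_inverse(2)[OF A B] that show ?thesis by blast
qed

definition noisy_gram :: "('p \<Rightarrow> 'p \<Rightarrow> real) \<Rightarrow> real \<Rightarrow> 'p list \<Rightarrow> real mat" where
  "noisy_gram k wsq X = Matrix.mat (length X) (length X) (\<lambda>(p, q). k (X ! p) (X ! q))
     + wsq \<cdot>\<^sub>m 1\<^sub>m (length X)"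

definition kernel_vec :: "('p \<Rightarrow> 'p \<Rightarrow> real) \<Rightarrow> 'p list \<Rightarrow> 'p \<Rightarrow> real vec" where
  "kernel_vec k X x = Matrix.vec (length X) (\<lambda>p. k x (X ! p))"

lemma post_var_eq:
  "post_var k wsq X x
     = k x x - Matrix.scalar_prod (kernel_vec k X x) (the (mat_inverse (noisy_gram k wsq X)) *\<^sub>v kernel_vec k X x)"
  unfolding post_var_def noisy_gram_def kernel_vec_def Let_def ..

lemma noisy_gram_carrier: "noisy_gram k wsq X \<in> carrier_mat (length X) (length X)"
  unfolding noisy_gram_def by simp

lemma index_noisy_gram:
  assumes "p < length X" and "q < length X"
  shows "noisy_gram k wsq X $$ (p, q) = k (X ! p) (X ! q) + (if p = q then wsq else 0)"
  using assms unfolding noisy_gram_def by simp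

lemma noisy_gram_quadratic_form_ge:
  assumes "psd_kernel k"
  shows "wsq * (\<Sum>p<length X. (c p)\<^sup>2)
           \<le> (\<Sum>p<length X. \<Sum>q<length X. c p * c q * noisy_gram k wsq X $$ (p, q))"
proof -
  let ?n = "length X"
  have "(\<Sum>p<?n. \<Sum>q<?n. c p * c q * noisy_gram k wsq X $$ (p, q))
      = (\<Sum>p<?n. \<Sum>q<?n. c p * c q * k (X ! p) (X ! q) + (if p = q then c p * c q * wsq else 0))"
    by (intro sum.cong refl) (simp add: index_noisy_gram algebra_simps)
  also have "\<dots> = (\<Sum>p<?n. \<Sum>q<?n. c p * c q * k (X ! p) (X ! q)) + wsq * (\<Sum>p<?n. (c p)\<^sup>2)"
    by (simp add: sum.distrib sum_distrib_left power2_eq_square mult_ac)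
  finally show ?thesis
    using psd_kernelD[OF assms, where n = ?n and c = c and z = "\<lambda>p. X ! p"] by simp
qed

lemma noisy_gram_injective:
  assumes "psd_kernel k" and "0 < wsq"
    and v: "v \<in> carrier_vec (length X)" and zero: "noisy_gram k wsq X *\<^sub>v v = 0\<^sub>v (length X)"
  shows "v = 0\<^sub>v (length X)"
proof -
  let ?n = "length X"
  have "(\<Sum>p<?n. \<Sum>q<?n. vec_index v p * vec_index v q * noisy_gram k wsq X $$ (p, q))
      = (\<Sum>p<?n. vec_index v p * vec_index (noisy_gram k wsq X *\<^sub>v v) p)"
    using v by (simp add: mult_mat_vec_index_sum[OF noisy_gram_carrier] sum_distrib_left mult_ac)
  also have "\<dots> = 0"
    using zero by simp
  finally have "wsq * (\<Sum>p<?n. (vec_index v p)\<^sup>2) \<le> 0"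
    using noisy_gram_quadratic_form_ge[OF assms(1), where wsq = wsq and X = X and c = "vec_index v"] by simp
  then have "(\<Sum>p<?n. (vec_index v p)\<^sup>2) = 0"
    using \<open>0 < wsq\<close> by (simp add: mult_le_0_iff sum_nonneg order.antisym)
  then have "vec_index v p = 0" if "p < ?n" for p
    using that by (simp add: sum_nonneg_eq_0_iff)
  then show ?thesis
    using v by (intro eq_vecI) auto
qed

lemma post_var_le_quadratic:
  assumes "psd_kernel k" and sym: "\<And>u v. k u v = k v u" and "0 < wsq"
  shows "post_var k wsq X x \<le> k x x - (2 * (\<Sum>p<length X. a p * k x (X ! p))
           - (\<Sum>p<length X. \<Sum>q<length X. a p * a q * noisy_gram k wsq X $$ (p, q)))"
proof -
  let ?n = "length X" and ?G = "noisy_gram k wsq X" and ?kv = "kernel_vec k X x"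
  obtain B where B: "mat_inverse ?G = Some B" "?G * B = 1\<^sub>m ?n" "B \<in> carrier_mat ?n ?n"
    using mat_inverse_if_injective[OF noisy_gram_carrier noisy_gram_injective[OF assms(1,3)]] by blast
  define w where "w = B *\<^sub>v ?kv"
  have kv: "?kv \<in> carrier_vec ?n" unfolding kernel_vec_def by simp
  have w: "w \<in> carrier_vec ?n" unfolding w_def using B(3) kv by simp
  have Gw: "?G *\<^sub>v w = ?kv"
    unfolding w_def using assoc_mult_mat_vec[OF noisy_gram_carrier B(3) kv, symmetric] B(2) kv by simp
  have solves: "(\<Sum>q<?n. ?G $$ (p, q) * vec_index w q) = k x (X ! p)" if "p < ?n" for p
    using mult_mat_vec_index_sum[OF noisy_gram_carrier[of k wsq X] w that, symmetric] Gw that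
    by (simp add: kernel_vec_def)
  have "post_var k wsq X x = k x x - (\<Sum>p<?n. k x (X ! p) * vec_index w p)"
    unfolding post_var_eq B(1) option.sel w_def[symmetric]
    using w by (simp add: scalar_prod_def kernel_vec_def atLeast0LessThan)
  moreover have "2 * (\<Sum>p<?n. a p * k x (X ! p)) - (\<Sum>p<?n. \<Sum>q<?n. a p * a q * ?G $$ (p, q))
      \<le> (\<Sum>p<?n. k x (X ! p) * vec_index w p)"
  proof (rule psd_quadratic_form_bound)
    show "?G $$ (p, q) = ?G $$ (q, p)" if "p < ?n" "q < ?n" for p q
      using that sym by (simp add: index_noisy_gram)
    show "0 \<le> (\<Sum>p<?n. \<Sum>q<?n. b p * b q * ?G $$ (p, q))" for b
      using noisy_gram_quadratic_form_ge[OF assms(1), where wsq = wsq and X = X and c = b] \<open>0 < wsq\<close>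
      by (smt (verit) mult_nonneg_nonneg sum_nonneg zero_le_power2)
  qed (rule solves)
  ultimately show ?thesis by linarith
qed

lemma sum_if_nth_eq:
  "(\<Sum>p<length xs. if xs ! p = y then b else 0) = real (count_list xs y) * b"
proof -
  have "{p \<in> {..<length xs}. xs ! p = y} = {p. p < length xs \<and> y = xs ! p}"
    by auto
  then show ?thesis
    using sum.inter_filter[of "{..<length xs}" "\<lambda>_. b" "\<lambda>p. xs ! p = y", symmetric]
    by (simp add: count_list_eq_length_filter length_filter_conv_card)
qed

lemma post_var_le_replicated:
  fixes X :: "'p list" and xi :: 'p
  assumes "psd_kernel k" and "\<And>u v. k u v = k v u" and "0 < wsq"
  defines "N \<equiv> real (count_list X xi)"
  shows "post_var k wsq X x \<le> k x x - N * (k x xi)\<^sup>2 / (N * k xi xi + wsq)"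
proof -
  let ?n = "length X" and ?G = "noisy_gram k wsq X"
  define D where "D = N * k xi xi + wsq"
  define c where "c = k x xi / D"
  define a where "a p = (if X ! p = xi then c else 0)" for p
  have "0 < D"
    unfolding D_def N_def using psd_kernel_diag_nonneg[OF assms(1)] \<open>0 < wsq\<close>
    by (simp add: add_nonneg_pos)
  have "(\<Sum>p<?n. a p * k x (X ! p)) = (\<Sum>p<?n. if X ! p = xi then c * k x xi else 0)"
    by (intro sum.cong) (auto simp: a_def)
  then have linear: "(\<Sum>p<?n. a p * k x (X ! p)) = N * c * k x xi"
    by (simp add: sum_if_nth_eq N_def)
  have row: "(\<Sum>q<?n. a p * a q * ?G $$ (p, q)) = c\<^sup>2 * D" if "p < ?n" and "X ! p = xi" for p
  proof -
    have "(\<Sum>q<?n. a p * a q * ?G $$ (p, q))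
        = (\<Sum>q<?n. (if X ! q = xi then c\<^sup>2 * k xi xi else 0) + (if q = p then c\<^sup>2 * wsq else 0))"
      using that by (intro sum.cong) (auto simp: a_def index_noisy_gram power2_eq_square algebra_simps)
    also have "\<dots> = c\<^sup>2 * D"
      using that by (simp add: sum.distrib sum_if_nth_eq D_def N_def algebra_simps)
    finally show ?thesis .
  qed
  have "(\<Sum>p<?n. \<Sum>q<?n. a p * a q * ?G $$ (p, q)) = (\<Sum>p<?n. if X ! p = xi then c\<^sup>2 * D else 0)"
    using row by (intro sum.cong) (auto simp: a_def)
  then have quadratic: "(\<Sum>p<?n. \<Sum>q<?n. a p * a q * ?G $$ (p, q)) = N * c\<^sup>2 * D"
    by (simp add: sum_if_nth_eq N_def)
  have "2 * (N * c * k x xi) - N * c\<^sup>2 * D = N * (k x xi)\<^sup>2 / D"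
    unfolding c_def using \<open>0 < D\<close> by (simp add: field_simps power2_eq_square)
  then show ?thesis
    using post_var_le_quadratic[OF assms(1-3), where X = X and a = a and x = x] linear quadratic
    unfolding D_def by linarith
qed

lemma se_kernel_self: "se_kernel s l u u = s"
  unfolding se_kernel_def by simp

lemma se_kernel_commute: "se_kernel s l u v = se_kernel s l v u"
  unfolding se_kernel_def by (simp add: norm_minus_commute)

lemma se_kernel_sq: "(se_kernel s l u v)\<^sup>2 = s\<^sup>2 * exp (- (dist u v)\<^sup>2 / l\<^sup>2)"
proof -
  have "(exp (- (dist u v)\<^sup>2 / (2 * l\<^sup>2)))\<^sup>2 = exp (- (dist u v)\<^sup>2 / l\<^sup>2)"
    by (simp add: power2_eq_square exp_add[symmetric])
  then show ?thesis
    unfolding se_kernel_def dist_norm by (simp add: power_mult_distrib)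
qed

lemma le_exp_neg_sq_div_if_le_sqrt_neg_ln:
  fixes C l r :: real
  assumes "0 < C" and "0 < l" and "0 \<le> r" and "r \<le> l * sqrt (- ln C)"
  shows "C \<le> exp (- r\<^sup>2 / l\<^sup>2)"
proof -
  have "0 \<le> sqrt (- ln C)"
    using assms by (smt (verit) mult_pos_neg)
  then have "0 \<le> - ln C" by simp
  have "r / l \<le> sqrt (- ln C)"
    using assms(2,4) by (simp add: divide_le_eq mult.commute)
  then have "(r / l)\<^sup>2 \<le> - ln C"
    using assms(2,3) \<open>0 \<le> - ln C\<close> by (metis divide_nonneg_pos power_mono real_sqrt_pow2)
  then have "ln C \<le> - r\<^sup>2 / l\<^sup>2"
    by (simp add: power_divide)
  then show ?thesis
    using assms(1) by (metis exp_le_cancel_iff exp_ln)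
qed

lemma replicated_variance_le:
  fixes s N wsq \<Delta> E :: real
  assumes "0 < s" and "0 < N" and "0 \<le> wsq"
    and "(1 + wsq / (N * s)) * (1 - \<Delta> / s) \<le> E"
  shows "s - N * (s\<^sup>2 * E) / (N * s + wsq) \<le> \<Delta>"
proof -
  have "(1 + wsq / (N * s)) * (1 - \<Delta> / s) = (N * s + wsq) * (s - \<Delta>) / (N * s\<^sup>2)"
    using assms(1,2) by (simp add: field_simps power2_eq_square)
  with assms have "(N * s + wsq) * (s - \<Delta>) \<le> N * (s\<^sup>2 * E)"
    by (simp add: divide_le_eq mult_ac)
  moreover have "0 < N * s + wsq"
    using assms(1-3) by (simp add: add_pos_nonneg)
  ultimately show ?thesis
    by (simp add: field_simps)
qed

theorem lemma2:
  fixes U :: "(real^2) set" and s0sq l wsq \<Delta> r :: real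
    and x :: "real^2" and X :: "(real^2) list" and xi :: "real^2" and n_suff :: nat
  assumes "s0sq > 0" and "l > 0" and "wsq > 0"
    and "0 < \<Delta>" and "\<Delta> < s0sq"
    and "x \<in> U" and "set X \<subseteq> U"
    and "xi \<in> set X" and "dist x xi = r"
    and "n_suff \<ge> 1" and "count_list X xi = n_suff"
    and "r \<le> l * sqrt (- ln ((1 + wsq / (real n_suff * s0sq)) * (1 - \<Delta> / s0sq)))"
  shows "MSE (se_kernel s0sq l) wsq X x \<le> \<Delta>"
proof -
  let ?k = "se_kernel s0sq l" and ?N = "real n_suff"
  let ?C = "(1 + wsq / (?N * s0sq)) * (1 - \<Delta> / s0sq)"
  have "0 < ?C"
    using assms(1,3,5,10) by (intro mult_pos_pos add_pos_pos) auto
  then have C_le: "?C \<le> exp (- r\<^sup>2 / l\<^sup>2)"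
    using assms(2,9,12) by (intro le_exp_neg_sq_div_if_le_sqrt_neg_ln) auto
  have "psd_kernel ?k"
    using assms(1) by (simp add: psd_kernel_se_kernel)
  then have "MSE ?k wsq X x \<le> s0sq - ?N * (?k x xi)\<^sup>2 / (?N * s0sq + wsq)"
    using post_var_le_replicated[OF _ se_kernel_commute assms(3), where X = X and x = x and xi = xi]
      assms(11) by (simp add: MSE_def se_kernel_self)
  also have "\<dots> = s0sq - ?N * (s0sq\<^sup>2 * exp (- r\<^sup>2 / l\<^sup>2)) / (?N * s0sq + wsq)"
    using assms(9) by (simp add: se_kernel_sq)
  also have "\<dots> \<le> \<Delta>"
    using assms(1,3,10) C_le by (intro replicated_variance_le) auto
  finally show ?thesis .
qed

end
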